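(* Let $G$ be a signature that is not IM-terraced but all of whose pinnings $G_p$ with $\mathrm{dom}(p)\ne\emptyset$ are IM-terraced. Then $G$ is equivalent (by renaming variables) to a signature $F$ on $\{1,\dots,k\}$ such that: (a) the pinning of $F$ by $\{1\mapsto0,2\mapsto1\}$ is identically zero; and (b) there exist a configuration $z\in\{0,1\}^{\{3,\dots,k\}}$ and a non-degenerate signature $T:\{0,1\}^2\to\mathbb R_{\ge0}$ such that for all $x,y_3,\dots,y_k\in\{0,1\}$, $F(x,x,y_3,\dots,y_k)=T(y_3,x)$ if $y=z$ or $y=\overline z$, and $F(x,x,y_3,\dots,y_k)=0$ otherwise, where $y=(y_3,\dots,y_k)$.
   Context: A signature on $V$ is a function $\{0,1\}^V\to\mathbb R_{\ge0}$. A partial configuration $p$ is an element of $\{0,1\}^{\mathrm{dom}(p)}$ with $\mathrm{dom}(p)\subseteq V$; the pinning $F_p$ on $V\setminus\mathrm{dom}(p)$ is $F_p(x)=F(x,p)$; $p^{\{i\}}$ is $p$ with coordinate $i$ flipped. $F$ is IM-terraced if for every partial configuration $p$ and all $i,j\in\mathrm{dom}(p)$ with $p_i\ne p_j$: if $F_p$ is identically zero then $F_{p^{\{i\}}}$ and $F_{p^{\{j\}}}$ are linearly dependent (one is a scalar multiple of the other). An arity-2 signature $T$ is degenerate if $T(a,b)=U(a)U'(b)$ for some functions $U,U'$. $\overline z_i=1-z_i$. *)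

theory Defs
  imports Complex_Main
begin

text \<open>Configurations are total functions 'v => bool (False = 0, True = 1); a signature
  on a finite variable set V is a nonnegative real function of configurations that depends
  only on the values on V. A partial configuration is a pair (D, p) with D the domain; only
  the values of p on D matter.\<close>

definition is_signature :: "'v set \<Rightarrow> (('v \<Rightarrow> bool) \<Rightarrow> real) \<Rightarrow> bool" where
  "is_signature V F \<longleftrightarrow> finite V \<and> (\<forall>x. 0 \<le> F x) \<and>
     (\<forall>x y. (\<forall>v\<in>V. x v = y v) \<longrightarrow> F x = F y)"

definition merge_conf :: "'v set \<Rightarrow> ('v \<Rightarrow> bool) \<Rightarrow> ('v \<Rightarrow> bool) \<Rightarrow> ('v \<Rightarrow> bool)" where
  "merge_conf D p x = (\<lambda>v. if v \<in> D then p v else x v)"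

definition pin :: "(('v \<Rightarrow> bool) \<Rightarrow> real) \<Rightarrow> 'v set \<Rightarrow> ('v \<Rightarrow> bool) \<Rightarrow> (('v \<Rightarrow> bool) \<Rightarrow> real)" where
  "pin F D p = (\<lambda>x. F (merge_conf D p x))"

definition flip :: "('v \<Rightarrow> bool) \<Rightarrow> 'v \<Rightarrow> ('v \<Rightarrow> bool)" where
  "flip p i = p(i := \<not> p i)"

definition lin_dep :: "(('v \<Rightarrow> bool) \<Rightarrow> real) \<Rightarrow> (('v \<Rightarrow> bool) \<Rightarrow> real) \<Rightarrow> bool" where
  "lin_dep f g \<longleftrightarrow> (\<exists>c. \<forall>x. f x = c * g x) \<or> (\<exists>c. \<forall>x. g x = c * f x)"

definition IM_terraced :: "'v set \<Rightarrow> (('v \<Rightarrow> bool) \<Rightarrow> real) \<Rightarrow> bool" where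
  "IM_terraced V F \<longleftrightarrow>
     (\<forall>D p i j. D \<subseteq> V \<longrightarrow> i \<in> D \<longrightarrow> j \<in> D \<longrightarrow> p i \<noteq> p j \<longrightarrow>
        (\<forall>x. pin F D p x = 0) \<longrightarrow>
        lin_dep (pin F D (flip p i)) (pin F D (flip p j)))"

definition degenerate2 :: "(bool \<Rightarrow> bool \<Rightarrow> real) \<Rightarrow> bool" where
  "degenerate2 T \<longleftrightarrow> (\<exists>U U' :: bool \<Rightarrow> real. \<forall>a b. T a b = U a * U' b)"

end

theory Submission
  imports Defs
begin

text \<open>
  Take a witness of the failure: a pinning \<open>p\<close> with \<open>G_p \<equiv> 0\<close> and \<open>p i \<noteq> p j\<close> for which
  \<open>G_{p^i}\<close> and \<open>G_{p^j}\<close> are linearly independent.  Pinning one more variable would give a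
  witness for a pinning of \<open>G\<close>, so the witness pins exactly \<open>i\<close> and \<open>j\<close>; thus \<open>G\<close>
  vanishes on \<open>y i = 0, y j = 1\<close> and its two diagonal slices \<open>a = G(x; 1, 1)\<close>,
  \<open>b = G(x; 0, 0)\<close> are independent.  Pinning a third variable \<open>l\<close> at any value, the
  same pinning \<open>{i \<mapsto> 0, j \<mapsto> 1}\<close> is now a zero pinning of an IM-terraced signature, so the
  2x2 minors of \<open>(a, b)\<close> vanish on pairs of configurations agreeing at \<open>l\<close>.  A purely
  algebraic argument then shows that \<open>(a, b)\<close> is supported on one antipodal pair
  \<open>u, \<not> u\<close> of configurations of the other variables.  Finally the variables are renamed
  to \<open>1..k\<close> with \<open>i, j\<close> as 1, 2.
\<close>

lemma sig_cong:
  assumes "is_signature V G" and "\<And>v. v \<in> V \<Longrightarrow> x v = y v"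
  shows "G x = G y"
  using assms unfolding is_signature_def by blast

lemma lin_dep_sym: "lin_dep f g \<longleftrightarrow> lin_dep g f"
  unfolding lin_dep_def by blast

lemma lin_dep_iff_det:
  "lin_dep f g \<longleftrightarrow> (\<forall>u v. f u * g v = f v * g u)"
proof
  assume "lin_dep f g"
  then show "\<forall>u v. f u * g v = f v * g u"
    unfolding lin_dep_def by auto
next
  assume det: "\<forall>u v. f u * g v = f v * g u"
  show "lin_dep f g"
  proof (cases "\<exists>x0. g x0 \<noteq> 0")
    case True
    then obtain x0 where x0: "g x0 \<noteq> 0" by blast
    have "\<forall>x. f x = (f x0 / g x0) * g x"
    proof
      fix x
      have "f x * g x0 = f x0 * g x" using det by simp
      then show "f x = (f x0 / g x0) * g x" using x0 by (simp add: field_simps)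
    qed
    then show ?thesis unfolding lin_dep_def by blast
  next
    case False
    then have "\<forall>x. g x = 0 * f x" by simp
    then show ?thesis unfolding lin_dep_def by blast
  qed
qed

lemma proportional_to_independent_is_zero:
  fixes x1 y1 x2 y2 p q :: "'a::field"
  assumes indep: "x1 * y2 \<noteq> x2 * y1"
    and prop1: "p * y1 = x1 * q" and prop2: "p * y2 = x2 * q"
  shows "p = 0 \<and> q = 0"
proof -
  have "p * (x1 * y2 - x2 * y1) = x1 * (p * y2) - x2 * (p * y1)"
    by (simp add: algebra_simps)
  also have "\<dots> = 0" using prop1 prop2 by (simp add: algebra_simps)
  finally have "p = 0" using indep by simp
  have "q * (x1 * y2 - x2 * y1) = y2 * (x1 * q) - y1 * (x2 * q)"
    by (simp add: algebra_simps)
  also have "\<dots> = y2 * (p * y1) - y1 * (p * y2)" using prop1 prop2 by simp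
  also have "\<dots> = 0" by (simp add: algebra_simps)
  finally have "q = 0" using indep by simp
  with \<open>p = 0\<close> show ?thesis by simp
qed

lemma pin_pin:
  assumes "p l = q l"
  shows "pin (pin F {l} q) E p = pin F (insert l E) p"
proof
  fix x
  have "merge_conf {l} q (merge_conf E p x) = merge_conf (insert l E) p x"
    using assms by (auto simp: merge_conf_def)
  then show "pin (pin F {l} q) E p x = pin F (insert l E) p x" by (simp add: pin_def)
qed

lemma pinned_IM_witness:
  assumes IM: "IM_terraced (V - {l}) (pin G {l} p)"
    and E: "E \<subseteq> V - {l}" "i \<in> E" "j \<in> E" "p i \<noteq> p j"
    and zero: "\<forall>x. pin G (insert l E) p x = 0"
  shows "lin_dep (pin G (insert l E) (flip p i)) (pin G (insert l E) (flip p j))"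
proof -
  have "l \<noteq> i" "l \<noteq> j" using E by auto
  then have "flip p i l = p l" "flip p j l = p l" by (auto simp: flip_def)
  then have "lin_dep (pin (pin G {l} p) E (flip p i)) (pin (pin G {l} p) E (flip p j))"
    using IM[unfolded IM_terraced_def, rule_format, of E i j p] E zero by (simp add: pin_pin)
  with \<open>flip p i l = p l\<close> \<open>flip p j l = p l\<close> show ?thesis by (simp add: pin_pin)
qed

lemma pin_vanishes:
  assumes "\<forall>x. pin G D p x = 0" and "\<forall>v\<in>D. y v = p v"
  shows "G y = 0"
proof -
  have "merge_conf D p y = y" using assms(2) by (auto simp: merge_conf_def)
  then show ?thesis using assms(1) by (metis pin_def)
qed

definition pinnings_IM_terraced :: "'v set \<Rightarrow> (('v \<Rightarrow> bool) \<Rightarrow> real) \<Rightarrow> bool" where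
  "pinnings_IM_terraced V G \<longleftrightarrow>
     (\<forall>D p. D \<subseteq> V \<longrightarrow> D \<noteq> {} \<longrightarrow> IM_terraced (V - D) (pin G D p))"

lemma pinning_IM_terraced:
  "pinnings_IM_terraced V G \<Longrightarrow> D \<subseteq> V \<Longrightarrow> D \<noteq> {} \<Longrightarrow> IM_terraced (V - D) (pin G D p)"
  unfolding pinnings_IM_terraced_def by blast

text \<open>Minimality: if every proper pinning is IM-terraced, a witness \<open>(D, p, i, j)\<close>
  of the failure of IM-terracedness pins exactly the two variables \<open>i\<close> and \<open>j\<close>; any
  further pinned variable \<open>l\<close> would yield a witness for the pinning at \<open>l\<close>.\<close>
lemma witness_domain_is_pair:
  assumes pins: "pinnings_IM_terraced V G"
    and D: "D \<subseteq> V" "i \<in> D" "j \<in> D" "p i \<noteq> p j"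
    and zero: "\<forall>x. pin G D p x = 0"
    and indep: "\<not> lin_dep (pin G D (flip p i)) (pin G D (flip p j))"
  shows "D = {i, j}"
proof (rule ccontr)
  assume "D \<noteq> {i, j}"
  then obtain l where l: "l \<in> D" "l \<noteq> i" "l \<noteq> j" using D by blast
  then have D_eq: "insert l (D - {l}) = D" by blast
  have IM: "IM_terraced (V - {l}) (pin G {l} p)" using pinning_IM_terraced[OF pins, of "{l}" p] l D by auto
  have "lin_dep (pin G (insert l (D - {l})) (flip p i)) (pin G (insert l (D - {l})) (flip p j))"
    by (rule pinned_IM_witness[OF IM]) (use D l zero D_eq in auto)
  with indep show False unfolding D_eq by contradiction
qed

text \<open>These are the two signatures that a witness with \<open>p i = 0, p j = 1\<close> compares.\<close>
definition diag_slice :: "(('v \<Rightarrow> bool) \<Rightarrow> real) \<Rightarrow> 'v \<Rightarrow> 'v \<Rightarrow> bool \<Rightarrow> ('v \<Rightarrow> bool) \<Rightarrow> real" where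
  "diag_slice G i j c = (\<lambda>x. G (x(i := c, j := c)))"

lemma pin_flip_diag_slice:
  assumes "i \<in> D" "j \<in> D" "p i = False" "p j = True"
  shows "pin G D (flip p i) x = diag_slice G i j True (merge_conf (D - {i, j}) p x)"
    and "pin G D (flip p j) x = diag_slice G i j False (merge_conf (D - {i, j}) p x)"
proof -
  have "i \<noteq> j" using assms by auto
  then have "merge_conf D (flip p i) x = (merge_conf (D - {i, j}) p x)(i := True, j := True)"
    and "merge_conf D (flip p j) x = (merge_conf (D - {i, j}) p x)(i := False, j := False)"
    using assms by (auto simp: merge_conf_def flip_def fun_eq_iff)
  then show "pin G D (flip p i) x = diag_slice G i j True (merge_conf (D - {i, j}) p x)"
    and "pin G D (flip p j) x = diag_slice G i j False (merge_conf (D - {i, j}) p x)"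
    by (simp_all add: pin_def diag_slice_def)
qed

lemma pair_witness:
  assumes notIM: "\<not> IM_terraced V G"
    and pins: "pinnings_IM_terraced V G"
  obtains i j where "i \<in> V" "j \<in> V" "i \<noteq> j"
    and "\<forall>y. y i = False \<longrightarrow> y j = True \<longrightarrow> G y = 0"
    and "\<not> lin_dep (diag_slice G i j True) (diag_slice G i j False)"
proof -
  have "\<exists>D p i0 j0. D \<subseteq> V \<and> i0 \<in> D \<and> j0 \<in> D \<and> p i0 \<noteq> p j0 \<and>
      (\<forall>x. pin G D p x = 0) \<and> \<not> lin_dep (pin G D (flip p i0)) (pin G D (flip p j0))"
    using notIM unfolding IM_terraced_def by (simp only: not_all not_imp)
  then obtain D p i0 j0 where D: "D \<subseteq> V" "i0 \<in> D" "j0 \<in> D" "p i0 \<noteq> p j0"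
    and zero: "\<forall>x. pin G D p x = 0"
    and indep0: "\<not> lin_dep (pin G D (flip p i0)) (pin G D (flip p j0))"
    by metis
  obtain i j where ij: "i \<in> D" "j \<in> D" "p i = False" "p j = True"
    and indep: "\<not> lin_dep (pin G D (flip p i)) (pin G D (flip p j))"
  proof (cases "p i0")
    case True
    have "\<not> lin_dep (pin G D (flip p j0)) (pin G D (flip p i0))"
      using indep0 by (metis lin_dep_sym)
    then show ?thesis using True D by (intro that[of j0 i0]) auto
  next
    case False
    then show ?thesis using D indep0 by (intro that[of i0 j0]) auto
  qed
  have "p i \<noteq> p j" using ij by simp
  with pins D(1) ij(1,2) have D_pair: "D = {i, j}" using zero indep by (rule witness_domain_is_pair)
  have "pin G D (flip p i) = diag_slice G i j True" "pin G D (flip p j) = diag_slice G i j False"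
    using pin_flip_diag_slice[of i D j p G] ij by (simp_all add: D_pair merge_conf_def fun_eq_iff)
  with indep have "\<not> lin_dep (diag_slice G i j True) (diag_slice G i j False)" by simp
  moreover have "\<forall>y. y i = False \<longrightarrow> y j = True \<longrightarrow> G y = 0"
    using pin_vanishes[OF zero] ij(3,4) by (simp add: D_pair)
  moreover have "i \<in> V" "j \<in> V" "i \<noteq> j" using ij D(1) by auto
  ultimately show ?thesis using that by blast
qed

text \<open>Conversely, pinning any third variable \<open>l\<close> and using that this pinning is
  IM-terraced shows: the 2x2 minor of the two diagonal slices vanishes on every pair of
  configurations agreeing at \<open>l\<close>.\<close>
lemma diag_slice_minors:
  assumes pins: "pinnings_IM_terraced V G"
    and ij: "i \<in> V" "j \<in> V" "i \<noteq> j"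
    and vanish: "\<forall>y. y i = False \<longrightarrow> y j = True \<longrightarrow> G y = 0"
    and l: "l \<in> V - {i, j}" and agree: "u l = v l"
  shows "diag_slice G i j True u * diag_slice G i j False v
       = diag_slice G i j True v * diag_slice G i j False u"
proof -
  define p where "p = (\<lambda>_. False)(j := True, l := u l)"
  have p: "p i = False" "p j = True" "p l = u l" using ij l by (auto simp: p_def)
  define D where "D = insert l {i, j}"
  have IM: "IM_terraced (V - {l}) (pin G {l} p)" using pinning_IM_terraced[OF pins, of "{l}" p] l by auto
  have zero: "\<forall>x. pin G D p x = 0"
    using p by (auto simp: D_def pin_def merge_conf_def intro!: vanish[rule_format])
  have "lin_dep (pin G D (flip p i)) (pin G D (flip p j))"
    unfolding D_def by (rule pinned_IM_witness[OF IM]) (use ij l p zero D_def in auto)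
  then have det: "pin G D (flip p i) u * pin G D (flip p j) v
                = pin G D (flip p i) v * pin G D (flip p j) u"
    by (simp add: lin_dep_iff_det)
  have "merge_conf (D - {i, j}) p w = w" if "w l = u l" for w
    using that l p by (auto simp: D_def merge_conf_def)
  then have "merge_conf (D - {i, j}) p u = u" "merge_conf (D - {i, j}) p v = v"
    using agree by auto
  then show ?thesis
    using det pin_flip_diag_slice[of i D j p G] p by (simp add: D_def)
qed

definition minors_vanish_on :: "'v set \<Rightarrow> (bool \<Rightarrow> ('v \<Rightarrow> bool) \<Rightarrow> real) \<Rightarrow> bool" where
  "minors_vanish_on W s \<longleftrightarrow>
     (\<forall>l\<in>W. \<forall>u v. u l = v l \<longrightarrow> s True u * s False v = s True v * s False u)"

lemma minors_vanish_onD: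
  assumes "minors_vanish_on W s" and "l \<in> W" and "u l = v l"
  shows "s True u * s False v = s True v * s False u"
  using assms unfolding minors_vanish_on_def by simp

lemma independent_slices_antipodal:
  assumes "minors_vanish_on W s"
    and "s True u * s False v \<noteq> s True v * s False u" and "l \<in> W"
  shows "v l = (\<not> u l)"
proof (rule ccontr)
  assume "v l \<noteq> (\<not> u l)"
  then have "u l = v l" by auto
  with minors_vanish_onD[of W s l u v] assms show False by simp
qed

text \<open>Every configuration agreeing somewhere on \<open>W\<close> with \<open>u\<close> and somewhere with \<open>v\<close>,
  where \<open>u, v\<close> have a nonzero minor, is a zero of both functions: its value vector is
  proportional to the two independent vectors of \<open>u\<close> and \<open>v\<close>.\<close>
lemma slices_vanish_off_antipodes:
  assumes minors: "minors_vanish_on W s"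
    and indep: "s True u * s False v \<noteq> s True v * s False u"
    and w1: "w1 \<in> W" "Y w1 = u w1" and w2: "w2 \<in> W" "Y w2 = v w2"
  shows "s c Y = 0"
proof -
  have "s True Y = 0 \<and> s False Y = 0"
  proof (rule proportional_to_independent_is_zero[OF indep])
    show "s True Y * s False u = s True u * s False Y"
      using minors_vanish_onD[of W s w1 Y u] minors w1 by simp
    show "s True Y * s False v = s True v * s False Y"
      using minors_vanish_onD[of W s w2 Y v] minors w2 by simp
  qed
  then show ?thesis by (cases c) auto
qed

text \<open>Hence a linearly independent pair whose minors vanish on \<open>W\<close> is supported on an
  antipodal pair \<open>u, \<not> u\<close> of configurations of \<open>W\<close> (and \<open>W\<close> is nonempty); recording
  the two values at \<open>u\<close> and \<open>\<not> u\<close> gives a non-degenerate binary signature \<open>T\<close>.\<close>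
lemma antipodal_normal_form:
  fixes s :: "bool \<Rightarrow> ('v \<Rightarrow> bool) \<Rightarrow> real"
  assumes nonneg: "\<forall>c Y. 0 \<le> s c Y"
    and local: "\<forall>c Y Y'. (\<forall>w\<in>W. Y w = Y' w) \<longrightarrow> s c Y = s c Y'"
    and minors: "minors_vanish_on W s"
    and indep: "\<not> lin_dep (s True) (s False)"
  obtains u w0 and T :: "bool \<Rightarrow> bool \<Rightarrow> real"
  where "w0 \<in> W" "\<forall>a b. 0 \<le> T a b" "\<not> degenerate2 T"
    and "\<forall>c Y. s c Y = (if (\<forall>w\<in>W. Y w = u w) \<or> (\<forall>w\<in>W. Y w = (\<not> u w))
                       then T (Y w0) c else 0)"
proof -
  obtain u v where uv: "s True u * s False v \<noteq> s True v * s False u"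
    using indep by (auto simp: lin_dep_iff_det)
  have anti: "\<forall>l\<in>W. v l = (\<not> u l)"
    using independent_slices_antipodal[of W s u v] minors uv by blast
  have "W \<noteq> {}"
  proof
    assume "W = {}"
    then have "s c u = s c v" for c using local by simp
    with uv show False by (simp add: mult.commute)
  qed
  then obtain w0 where w0: "w0 \<in> W" by blast
  define T where "T b c = (if b = u w0 then s c u else s c v)" for b c
  have T_nonneg: "\<forall>a b. 0 \<le> T a b" using nonneg by (simp add: T_def)
  have T_nondeg: "\<not> degenerate2 T"
  proof
    assume "degenerate2 T"
    then obtain U U' where "\<forall>b c. T b c = U b * U' c" unfolding degenerate2_def by blast
    then have "T (u w0) True * T (\<not> u w0) False = T (\<not> u w0) True * T (u w0) False" by simp
    with uv show False by (simp add: T_def)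
  qed
  have normal: "\<forall>c Y. s c Y = (if (\<forall>w\<in>W. Y w = u w) \<or> (\<forall>w\<in>W. Y w = (\<not> u w))
                              then T (Y w0) c else 0)"
  proof (intro allI)
    fix c Y
    show "s c Y = (if (\<forall>w\<in>W. Y w = u w) \<or> (\<forall>w\<in>W. Y w = (\<not> u w)) then T (Y w0) c else 0)"
    proof (cases "\<forall>w\<in>W. Y w = u w")
      case True
      then have "s c Y = s c u" using local by blast
      then show ?thesis using True w0 by (simp add: T_def)
    next
      case not_u: False
      show ?thesis
      proof (cases "\<forall>w\<in>W. Y w = v w")
        case True
        then have "s c Y = s c v" using local by blast
        moreover have "\<forall>w\<in>W. Y w = (\<not> u w)" using True anti by simp
        ultimately show ?thesis using w0 by (simp add: T_def)
      next
        case False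
        then obtain w1 w2 where w1: "w1 \<in> W" "Y w1 = u w1" and w2: "w2 \<in> W" "Y w2 = v w2"
          using not_u anti by blast
        have "s c Y = 0" by (rule slices_vanish_off_antipodes[of W s u v, OF minors uv w1 w2])
        moreover have "\<not> (\<forall>w\<in>W. Y w = (\<not> u w))" using w1 by auto
        ultimately show ?thesis using not_u by auto
      qed
    qed
  qed
  show ?thesis by (rule that[OF w0 T_nonneg T_nondeg normal])
qed

lemma diagonal_normal_form:
  assumes sigG: "is_signature V G"
    and pins: "pinnings_IM_terraced V G"
    and ij: "i \<in> V" "j \<in> V" "i \<noteq> j"
    and vanish: "\<forall>y. y i = False \<longrightarrow> y j = True \<longrightarrow> G y = 0"
    and indep: "\<not> lin_dep (diag_slice G i j True) (diag_slice G i j False)"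
  obtains u w0 and T :: "bool \<Rightarrow> bool \<Rightarrow> real"
  where "w0 \<in> V - {i, j}" "\<forall>a b. 0 \<le> T a b" "\<not> degenerate2 T"
    and "\<forall>x Y. G (Y(i := x, j := x)) =
           (if (\<forall>w\<in>V - {i, j}. Y w = u w) \<or> (\<forall>w\<in>V - {i, j}. Y w = (\<not> u w))
            then T (Y w0) x else 0)"
proof -
  have nonneg: "\<forall>c Y. 0 \<le> diag_slice G i j c Y"
    using sigG by (simp add: is_signature_def diag_slice_def)
  have local: "\<forall>c Y Y'. (\<forall>w\<in>V - {i, j}. Y w = Y' w) \<longrightarrow>
                  diag_slice G i j c Y = diag_slice G i j c Y'"
  proof (intro allI impI)
    fix c and Y Y' :: "_ \<Rightarrow> bool" assume "\<forall>w\<in>V - {i, j}. Y w = Y' w"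
    then show "diag_slice G i j c Y = diag_slice G i j c Y'"
      unfolding diag_slice_def by (intro sig_cong[OF sigG]) auto
  qed
  have minors: "minors_vanish_on (V - {i, j}) (diag_slice G i j)"
    unfolding minors_vanish_on_def
  proof (intro ballI allI impI)
    fix l and u v :: "_ \<Rightarrow> bool" assume "l \<in> V - {i, j}" "u l = v l"
    then show "diag_slice G i j True u * diag_slice G i j False v
             = diag_slice G i j True v * diag_slice G i j False u"
      by (rule diag_slice_minors[OF pins ij vanish])
  qed
  obtain u w0 and T :: "bool \<Rightarrow> bool \<Rightarrow> real"
    where w0: "w0 \<in> V - {i, j}" and T: "\<forall>a b. 0 \<le> T a b" "\<not> degenerate2 T"
      and normal: "\<forall>c Y. diag_slice G i j c Y =
             (if (\<forall>w\<in>V - {i, j}. Y w = u w) \<or> (\<forall>w\<in>V - {i, j}. Y w = (\<not> u w))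
              then T (Y w0) c else 0)"
    by (rule antipodal_normal_form[OF nonneg local minors indep])
  from normal have "\<forall>x Y. G (Y(i := x, j := x)) =
      (if (\<forall>w\<in>V - {i, j}. Y w = u w) \<or> (\<forall>w\<in>V - {i, j}. Y w = (\<not> u w))
       then T (Y w0) x else 0)"
    unfolding diag_slice_def .
  then show ?thesis by (rule that[OF w0 T])
qed

lemma enumerate_with_prefix:
  assumes "finite V" "distinct xs" "set xs \<subseteq> V"
  obtains \<sigma> :: "nat \<Rightarrow> 'v" where "bij_betw \<sigma> {1..card V} V"
    and "\<forall>m < length xs. \<sigma> (Suc m) = xs ! m"
proof -
  obtain ys where ys: "set ys = V - set xs" "distinct ys"
    using finite_distinct_list[of "V - set xs"] assms(1) by auto
  define L where "L = xs @ ys"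
  have L: "distinct L" "set L = V" using assms ys by (auto simp: L_def)
  then have "length L = card V" using distinct_card by metis
  have shift: "bij_betw (\<lambda>m::nat. m - 1) {1..card V} {..<card V}"
    by (rule bij_betw_byWitness[where f' = Suc]) auto
  have "bij_betw ((!) L \<circ> (\<lambda>m. m - 1)) {1..card V} V"
    using bij_betw_trans[OF shift bij_betw_nth[OF L(1)]] L \<open>length L = card V\<close> by simp
  moreover have "\<forall>m < length xs. ((!) L \<circ> (\<lambda>m. m - 1)) (Suc m) = xs ! m"
    by (simp add: L_def nth_append)
  ultimately show ?thesis using that by blast
qed

lemma relabel_signature:
  assumes sigG: "is_signature V G" and bij: "bij_betw \<sigma> A V" and fin: "finite A"
  shows "is_signature A (\<lambda>y. G (y \<circ> inv_into A \<sigma>))"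
    and "G y = G (y \<circ> \<sigma> \<circ> inv_into A \<sigma>)"
proof -
  have inv: "inv_into A \<sigma> v \<in> A" "\<sigma> (inv_into A \<sigma> v) = v" if "v \<in> V" for v
    using that bij by (auto simp: bij_betw_def inv_into_into f_inv_into_f)
  show "is_signature A (\<lambda>y. G (y \<circ> inv_into A \<sigma>))"
    using sigG fin inv unfolding is_signature_def by (auto intro!: sig_cong[OF sigG])
  show "G y = G (y \<circ> \<sigma> \<circ> inv_into A \<sigma>)"
    using inv by (auto intro!: sig_cong[OF sigG])
qed

lemma relabel_first_two:
  fixes \<sigma> :: "nat \<Rightarrow> 'v" and k :: nat
  assumes bij: "bij_betw \<sigma> {1..k} V" and k: "3 \<le> k" and ij: "\<sigma> 1 = i" "\<sigma> 2 = j"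
  shows "V - {i, j} = \<sigma> ` {3..k}"
    and "w \<in> V \<Longrightarrow> (y(1 := a, 2 := b)) (inv_into {1..k} \<sigma> w)
                    = ((y \<circ> inv_into {1..k} \<sigma>)(i := a, j := b)) w"
proof -
  have inj: "inj_on \<sigma> {1..k}" and V: "V = \<sigma> ` {1..k}" using bij by (auto simp: bij_betw_def)
  have "\<sigma> ` ({1..k} - {1, 2}) = \<sigma> ` {1..k} - \<sigma> ` {1, 2}"
    using k by (intro inj_on_image_set_diff[OF inj]) auto
  moreover have "{1..k} - {1, 2} = {3..k}" by auto
  ultimately show "V - {i, j} = \<sigma> ` {3..k}" using V ij by simp
  assume "w \<in> V"
  then obtain m where m: "m \<in> {1..k}" "w = \<sigma> m" using V by blast
  then have "inv_into {1..k} \<sigma> w = m" using inv_into_f_f[OF inj] by simp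
  moreover have "w = i \<longleftrightarrow> m = 1" "w = j \<longleftrightarrow> m = 2"
    using m k ij inj_on_eq_iff[OF inj] by auto
  ultimately show "(y(1 := a, 2 := b)) (inv_into {1..k} \<sigma> w)
                 = ((y \<circ> inv_into {1..k} \<sigma>)(i := a, j := b)) w" by auto
qed

lemma relabel_pair_first:
  assumes sigG: "is_signature V G"
    and ij: "i \<in> V" "j \<in> V" "i \<noteq> j" and w0: "w0 \<in> V - {i, j}"
  obtains k :: nat and \<sigma> :: "nat \<Rightarrow> 'v" and F :: "(nat \<Rightarrow> bool) \<Rightarrow> real"
  where "3 \<le> k" "bij_betw \<sigma> {1..k} V" "is_signature {1..k} F" "\<forall>y. G y = F (y \<circ> \<sigma>)"
    and "\<sigma> 3 = w0" "V - {i, j} = \<sigma> ` {3..k}" "\<forall>m\<in>{1..k}. inv_into {1..k} \<sigma> (\<sigma> m) = m"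
    and "\<forall>y a b. F (y(1 := a, 2 := b)) = G ((y \<circ> inv_into {1..k} \<sigma>)(i := a, j := b))"
proof -
  have finV: "finite V" using sigG by (simp add: is_signature_def)
  have prefix: "distinct [i, j, w0]" "set [i, j, w0] \<subseteq> V" using ij w0 by auto
  obtain \<sigma> where bij: "bij_betw \<sigma> {1..card V} V"
    and first: "\<forall>m < length [i, j, w0]. \<sigma> (Suc m) = [i, j, w0] ! m"
    by (rule enumerate_with_prefix[OF finV prefix])
  define k where "k = card V"
  note bij = bij[folded k_def]
  have \<sigma>: "\<sigma> 1 = i" "\<sigma> 2 = j" "\<sigma> 3 = w0"
    using first[rule_format, of 0] first[rule_format, of 1] first[rule_format, of 2]
    by (simp_all add: numeral_2_eq_2 numeral_3_eq_3)
  have k: "3 \<le> k"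
    using card_mono[OF finV prefix(2)] distinct_card[OF prefix(1)] by (simp add: k_def)
  define si where "si = inv_into {1..k} \<sigma>"
  define F where "F = (\<lambda>y. G (y \<circ> si))"
  have F_pair: "\<forall>y a b. F (y(1 := a, 2 := b)) = G ((y \<circ> si)(i := a, j := b))"
  proof (intro allI)
    fix y a b
    show "F (y(1 := a, 2 := b)) = G ((y \<circ> si)(i := a, j := b))"
      unfolding F_def
    proof (rule sig_cong[OF sigG])
      fix w assume "w \<in> V"
      then show "(y(1 := a, 2 := b) \<circ> si) w = ((y \<circ> si)(i := a, j := b)) w"
        unfolding o_apply[of "y(1 := a, 2 := b)"] si_def by (rule relabel_first_two(2)[OF bij k \<sigma>(1,2)])
    qed
  qed
  have sigF: "is_signature {1..k} F"
    unfolding F_def si_def by (rule relabel_signature(1)[OF sigG bij finite_atLeastAtMost])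
  have GF: "\<forall>y. G y = F (y \<circ> \<sigma>)"
    unfolding F_def si_def using relabel_signature(2)[OF sigG bij finite_atLeastAtMost] by (rule allI)
  have inv: "\<forall>m\<in>{1..k}. si (\<sigma> m) = m"
    using bij by (simp add: si_def bij_betw_def)
  show ?thesis
    using that[OF k bij sigF GF \<sigma>(3) relabel_first_two(1)[OF bij k \<sigma>(1,2)]] inv F_pair
    unfolding si_def .
qed

theorem mainTheorem12:
  fixes V :: "'v set" and G :: "('v \<Rightarrow> bool) \<Rightarrow> real"
  assumes sigG: "is_signature V G"
    and notIM: "\<not> IM_terraced V G"
    and pinsIM: "\<And>D p. D \<subseteq> V \<Longrightarrow> D \<noteq> {} \<Longrightarrow> IM_terraced (V - D) (pin G D p)"
  shows "\<exists>(k::nat) (\<sigma>::nat \<Rightarrow> 'v) (F :: (nat \<Rightarrow> bool) \<Rightarrow> real).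
           3 \<le> k \<and> bij_betw \<sigma> {1..k} V \<and> is_signature {1..k} F \<and>
           (\<forall>y. G y = F (y \<circ> \<sigma>)) \<and>
           (\<forall>x. F (x(1 := False, 2 := True)) = 0) \<and>
           (\<exists>(z :: nat \<Rightarrow> bool) (T :: bool \<Rightarrow> bool \<Rightarrow> real).
              (\<forall>a b. 0 \<le> T a b) \<and> \<not> degenerate2 T \<and>
              (\<forall>(x::bool) (y :: nat \<Rightarrow> bool).
                 F (y(1 := x, 2 := x)) =
                   (if (\<forall>i\<in>{3..k}. y i = z i) \<or> (\<forall>i\<in>{3..k}. y i = (\<not> z i))
                    then T (y 3) x else 0)))"
proof -
  have pins: "pinnings_IM_terraced V G"
    using pinsIM unfolding pinnings_IM_terraced_def by blast
  obtain i j where ij: "i \<in> V" "j \<in> V" "i \<noteq> j"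
    and vanish: "\<forall>y. y i = False \<longrightarrow> y j = True \<longrightarrow> G y = 0"
    and indep: "\<not> lin_dep (diag_slice G i j True) (diag_slice G i j False)"
    by (rule pair_witness[OF notIM pins])
  obtain u w0 T where w0: "w0 \<in> V - {i, j}" and T: "\<forall>a b. 0 \<le> T a b" "\<not> degenerate2 T"
    and normal: "\<forall>x Y. G (Y(i := x, j := x)) =
              (if (\<forall>w\<in>V - {i, j}. Y w = u w) \<or> (\<forall>w\<in>V - {i, j}. Y w = (\<not> u w))
               then T (Y w0) x else 0)"
    by (rule diagonal_normal_form[OF sigG pins ij vanish indep])
  obtain k :: nat and \<sigma> F where k: "3 \<le> k" and bij: "bij_betw \<sigma> {1..k} V"
    and F: "is_signature {1..k} F" "\<forall>y. G y = F (y \<circ> \<sigma>)"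
    and \<sigma>3: "\<sigma> 3 = w0" and W: "V - {i, j} = \<sigma> ` {3..k}"
    and inv: "\<forall>m\<in>{1..k}. inv_into {1..k} \<sigma> (\<sigma> m) = m"
    and F_pair: "\<forall>y a b. F (y(1 := a, 2 := b)) = G ((y \<circ> inv_into {1..k} \<sigma>)(i := a, j := b))"
    by (rule relabel_pair_first[OF sigG ij w0])
  have "\<forall>x. F (x(1 := False, 2 := True)) = 0"
    using F_pair vanish ij(3) by simp
  moreover have "\<forall>x y. F (y(1 := x, 2 := x)) =
      (if (\<forall>m\<in>{3..k}. y m = (u \<circ> \<sigma>) m) \<or> (\<forall>m\<in>{3..k}. y m = (\<not> (u \<circ> \<sigma>) m))
       then T (y 3) x else 0)"
    using F_pair normal inv k unfolding W \<sigma>3[symmetric] by simp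
  ultimately show ?thesis
    using k bij F T by (intro exI[of _ k] exI[of _ \<sigma>] exI[of _ F] exI[of _ "u \<circ> \<sigma>"] exI[of _ T] conjI)
qed

end
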